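(* Let $m\ge1$ be an integer, let $\tilde H\in\Omega_{4n}$ be invertible and Hermitian, and let $\tilde B\in\Omega_{4n}$ be $\tilde H$-selfadjoint with $\sigma(\tilde B)\cap\mathbb{R}=\emptyset$. Then there exists an $\tilde H$-selfadjoint $\tilde A\in\Omega_{4n}$ such that $\tilde A^m=\tilde B$.
   Context: $\Omega_{2k}=\{\begin{bmatrix}A_1&\bar A_2\\-A_2&\bar A_1\end{bmatrix}: A_1,A_2\in\mathbb{C}^{k\times k}\}\subset\mathbb{C}^{2k\times 2k}$. For an invertible Hermitian $H$, $A$ is $H$-selfadjoint if $HA=A^*H$. $\sigma(\cdot)$ denotes the spectrum. *)

theory Defs
  imports "Jordan_Normal_Form.Schur_Decomposition" "Jordan_Normal_Form.Spectral_Radius"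
begin

text \<open>Omega k is the set of 2k x 2k complex matrices of block form
  [[A1, conj A2], [-A2, conj A1]] with A1, A2 complex k x k matrices.\<close>
definition Omega :: "nat \<Rightarrow> complex mat set" where
  "Omega k = {M. M \<in> carrier_mat (2*k) (2*k) \<and>
     (\<forall>i<k. \<forall>j<k. M $$ (k+i, k+j) = cnj (M $$ (i, j)) \<and>
                   M $$ (k+i, j) = - cnj (M $$ (i, k+j)))}"

definition hermitian_mat :: "complex mat \<Rightarrow> bool" where
  "hermitian_mat H \<longleftrightarrow> H \<in> carrier_mat (dim_row H) (dim_row H) \<and> mat_adjoint H = H"

definition H_selfadjoint :: "complex mat \<Rightarrow> complex mat \<Rightarrow> bool" where
  "H_selfadjoint H A \<longleftrightarrow> H * A = mat_adjoint A * H"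

end

(* Since B is H-selfadjoint, B^* = H B H^-1 is similar to B, so the characteristic polynomial
   of B has real coefficients and the spectrum S of B is closed under conjugation; by hypothesis it
   avoids the real axis. Choosing m-th roots on S compatibly with conjugation, interpolating, and
   lifting by Hensel's lemma gives a polynomial q with real coefficients such that q^m = X modulo
   a power of prod_{s in S} (X - s), which the characteristic polynomial divides. By
   Cayley-Hamilton A = q(B) satisfies A^m = B, and since q is real, q(B) inherits from B both
   membership in Omega (closed under sums, products and real scalars) and H-selfadjointness. *)

theory Submission
  imports Defs "HOL-Computational_Algebra.Field_as_Ring"
begin

section \<open>Real polynomial roots of X modulo powers\<close>

interpretation cnj_hom: comm_ring_hom cnj by unfold_locales auto
interpretation cnj_poly_hom: map_poly_comm_ring_hom cnj ..

abbreviation cnj_poly :: "complex poly \<Rightarrow> complex poly" where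
  "cnj_poly \<equiv> map_poly cnj"

lemma cnj_poly_cnj_poly [simp]: "cnj_poly (cnj_poly p) = p"
  by (simp add: map_poly_map_poly o_def)

lemma cnj_poly_smult [simp]: "cnj_poly (Polynomial.smult c p) = Polynomial.smult (cnj c) (cnj_poly p)"
  by (rule poly_eqI) (simp add: coeff_map_poly)

lemma cnj_poly_pCons: "cnj_poly (pCons a p) = pCons (cnj a) (cnj_poly p)"
  by (rule cnj_hom.map_poly_pCons_hom)

definition real_part_poly :: "complex poly \<Rightarrow> complex poly" where
  "real_part_poly p = Polynomial.smult (1/2) (p + cnj_poly p)"

lemma cnj_poly_real_part_poly [simp]: "cnj_poly (real_part_poly p) = real_part_poly p"
  by (simp add: real_part_poly_def cnj_poly_hom.hom_add add.commute)

lemma poly_real_part_poly: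
  "poly (real_part_poly p) z = (poly p z + cnj (poly p (cnj z))) / 2"
  by (simp add: real_part_poly_def)

lemma dvd_cnj_poly:
  assumes "cnj_poly P = P" and "P dvd f"
  shows "P dvd cnj_poly f"
proof -
  from \<open>P dvd f\<close> obtain g where "f = P * g" by (elim dvdE)
  then have "cnj_poly f = P * cnj_poly g" using assms(1) by (simp add: cnj_poly_hom.hom_mult)
  then show ?thesis by simp
qed

lemma dvd_real_part_poly:
  assumes "cnj_poly P = P" and "P dvd f"
  shows "P dvd real_part_poly f"
  unfolding real_part_poly_def using assms dvd_cnj_poly by (simp add: dvd_smult)

lemma power_add_eq_first_order:
  fixes a b :: "'a::comm_ring_1"
  assumes "m \<ge> 1"
  shows "\<exists>t. (a + b)^m = a^m + of_nat m * a^(m-1) * b + b^2 * t"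
  using assms
proof (induction m rule: dec_induct)
  case base
  show ?case by (intro exI[of _ 0]) simp
next
  case (step k)
  then obtain t where t: "(a + b)^k = a^k + of_nat k * a^(k-1) * b + b^2 * t" by blast
  have "a * a^(k-1) = a^k" using step(1) by (metis Suc_diff_le diff_Suc_1 power_Suc)
  then have "(a + b)^Suc k = a^Suc k + of_nat (Suc k) * a^(Suc k - 1) * b
      + b^2 * (of_nat k * a^(k-1) + t * (a + b))"
    using t by (simp add: algebra_simps power2_eq_square)
  then show ?case by blast
qed

lemma linear_congruence_solvable:
  fixes D P r :: "'a::euclidean_ring_gcd"
  assumes "coprime D P"
  shows "\<exists>s. P dvd r + D * s"
proof -
  obtain u v where "u * D + v * P = 1"
    using bezout_coefficients_fst_snd[of D P] assms by (metis coprime_iff_gcd_eq_1)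
  then have "1 - u * D = v * P" by (simp add: diff_eq_eq algebra_simps)
  have "r + D * (- u * r) = r * (1 - u * D)" by (simp add: algebra_simps)
  also have "\<dots> = P * (v * r)" unfolding \<open>1 - u * D = v * P\<close> by (simp add: ac_simps)
  finally have "P dvd r + D * (- u * r)" by simp
  then show ?thesis ..
qed

lemma coprime_derivative_power:
  fixes P q :: "complex poly"
  assumes "coprime [:0,1:] P" and "P dvd q^m - [:0,1:]" and "m \<ge> 1"
  shows "coprime (of_nat m * q^(m-1)) P"
proof -
  have "coprime q P"
  proof (rule coprimeI)
    fix c assume "c dvd q" and "c dvd P"
    have "q dvd q^m" using \<open>m \<ge> 1\<close> by (simp add: dvd_power)
    then have "c dvd q^m" using \<open>c dvd q\<close> by (rule dvd_trans[rotated])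
    moreover have "c dvd q^m - [:0,1:]" using \<open>c dvd P\<close> assms(2) by (rule dvd_trans)
    ultimately have "c dvd q^m - (q^m - [:0,1:])" by (rule dvd_diff)
    then have "c dvd [:0,1:]" by simp
    with \<open>c dvd P\<close> show "is_unit c" using assms(1) coprime_common_divisor by blast
  qed
  then have "coprime (q^(m-1)) P" by (simp add: coprime_power_left_iff)
  moreover have "is_unit (of_nat m :: complex poly)" using \<open>m \<ge> 1\<close>
    by (simp add: is_unit_poly_iff of_nat_poly)
  ultimately show ?thesis by (simp add: is_unit_left_imp_coprime)
qed

lemma real_part_poly_affine:
  assumes "cnj_poly r = r" and "cnj_poly D = D"
  shows "real_part_poly (r + D * s) = r + D * real_part_poly s"
proof -
  have "cnj (poly r (cnj z)) = poly r z" "cnj (poly D (cnj z)) = poly D z" for z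
    using arg_cong[OF assms(1), of "\<lambda>p. poly p z"] arg_cong[OF assms(2), of "\<lambda>p. poly p z"]
    by simp_all
  then have "poly (real_part_poly (r + D * s)) z = poly (r + D * real_part_poly s) z" for z
    by (simp add: poly_real_part_poly add_divide_distrib distrib_left)
  then show ?thesis by (intro poly_eq_poly_eq_iff[THEN iffD1] ext)
qed

lemma hensel_step:
  fixes P q :: "complex poly"
  assumes "cnj_poly P = P" and "cnj_poly q = q" and "coprime [:0,1:] P"
    and "P^j dvd q^m - [:0,1:]" and "j \<ge> 1" and "m \<ge> 1"
  shows "\<exists>q'. cnj_poly q' = q' \<and> P^Suc j dvd q'^m - [:0,1:]"
proof -
  let ?X = "[:0,1:] :: complex poly"
  define D where "D = of_nat m * q^(m-1)"
  obtain r where r: "q^m - ?X = P^j * r" using assms(4) by (elim dvdE)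
  have "P \<noteq> 0"
    using assms(3) by (auto simp: is_unit_poly_iff)
  have "P^j * cnj_poly r = cnj_poly (P^j * r)"
    using assms(1) by (simp add: cnj_poly_hom.hom_mult cnj_poly_hom.hom_power)
  also have "\<dots> = P^j * r"
    unfolding r[symmetric] using assms(2) by (simp add: cnj_poly_hom.hom_minus cnj_poly_hom.hom_power)
  finally have r_real: "cnj_poly r = r" using \<open>P \<noteq> 0\<close> by simp
  have D_real: "cnj_poly D = D"
    using assms(2) by (simp add: D_def cnj_poly_hom.hom_mult cnj_poly_hom.hom_power cnj_poly_hom.hom_of_nat)
  have "P dvd P^j" using assms(5) by (simp add: dvd_power)
  then have "P dvd q^m - ?X" using assms(4) by (rule dvd_trans)
  have "coprime D P" unfolding D_def
    using assms(3) \<open>P dvd q^m - ?X\<close> assms(6) by (rule coprime_derivative_power)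
  txt \<open>Newton correction \<open>q + P^j s\<close> with \<open>D s = -r\<close> mod \<open>P\<close>; as \<open>r\<close> and \<open>D\<close> are real,
    the real part of \<open>s\<close> also solves this congruence.\<close>
  then obtain s where "P dvd r + D * s" using linear_congruence_solvable by blast
  then have "P dvd r + D * real_part_poly s"
    using dvd_real_part_poly[OF assms(1)] real_part_poly_affine[OF r_real D_real] by metis
  define q' where "q' = q + P^j * real_part_poly s"
  obtain t where t: "q'^m = q^m + D * (P^j * real_part_poly s) + (P^j * real_part_poly s)^2 * t"
    using power_add_eq_first_order[OF assms(6)] unfolding q'_def D_def mult.assoc by blast
  have "q'^m - ?X = P^j * (r + D * real_part_poly s) + P^(2*j) * ((real_part_poly s)^2 * t)"
    unfolding t using r by (simp add: algebra_simps power_mult_distrib power_mult[symmetric])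
  moreover have "P^Suc j dvd P^j * (r + D * real_part_poly s)"
    using \<open>P dvd r + D * real_part_poly s\<close> by (simp add: mult_dvd_mono)
  moreover have "P^Suc j dvd P^(2*j) * ((real_part_poly s)^2 * t)"
    using assms(5) by (intro dvd_mult2 le_imp_power_dvd) simp
  ultimately have "P^Suc j dvd q'^m - ?X" by simp
  moreover have "cnj_poly q' = q'"
    using assms(1,2) by (simp add: q'_def cnj_poly_hom.hom_add cnj_poly_hom.hom_mult cnj_poly_hom.hom_power)
  ultimately show ?thesis by blast
qed

lemma hensel_lift:
  fixes P q :: "complex poly"
  assumes "cnj_poly P = P" and "cnj_poly q = q" and "coprime [:0,1:] P"
    and "P dvd q^m - [:0,1:]" and "m \<ge> 1" and "j \<ge> 1"
  shows "\<exists>q'. cnj_poly q' = q' \<and> P^j dvd q'^m - [:0,1:]"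
  using \<open>j \<ge> 1\<close>
proof (induction j rule: dec_induct)
  case base
  then show ?case using assms(2,4) by auto
next
  case (step j)
  then show ?case using hensel_step[OF assms(1) _ assms(3) _ step(1) assms(5)] by blast
qed

lemma polynomial_interpolation:
  fixes v :: "'a::field \<Rightarrow> 'a"
  assumes "finite S"
  shows "\<exists>p. \<forall>s\<in>S. poly p s = v s"
  using assms
proof (induction S rule: finite_induct)
  case empty
  show ?case by auto
next
  case (insert a S)
  then obtain p where p: "\<forall>s\<in>S. poly p s = v s" by blast
  define W where "W = (\<Prod>s\<in>S. [:-s, 1:])"
  have "poly W a \<noteq> 0" and "\<forall>s\<in>S. poly W s = 0"
    unfolding W_def using insert(1,2) by (auto simp: poly_prod)
  then have "\<forall>s\<in>insert a S. poly (p + Polynomial.smult ((v a - poly p a) / poly W a) W) s = v s"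
    using p by auto
  then show ?case by blast
qed

lemma prod_linear_dvd_if_roots:
  fixes f :: "'a::idom poly"
  assumes "finite S" and "\<forall>s\<in>S. poly f s = 0"
  shows "(\<Prod>s\<in>S. [:-s, 1:]) dvd f"
  using assms
proof (induction S arbitrary: f rule: finite_induct)
  case empty
  show ?case by simp
next
  case (insert a S)
  then obtain g where g: "f = [:-a, 1:] * g" by (metis dvdE insertI1 poly_eq_0_iff_dvd)
  have "\<forall>s\<in>S. poly g s = 0" using insert(2,4) unfolding g by auto
  then have "(\<Prod>s\<in>S. [:-s, 1:]) dvd g" using insert(3) by blast
  then show ?case unfolding g prod.insert[OF insert(1,2)] by (rule mult_dvd_mono[OF dvd_refl])
qed

lemma prod_list_linear_dvd_power:
  fixes S :: "'a::idom set"
  assumes "finite S" and "set as \<subseteq> S"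
  shows "(\<Prod>a\<leftarrow>as. [:-a, 1:]) dvd (\<Prod>s\<in>S. [:-s, 1:])^length as"
  using assms(2)
proof (induction as)
  case Nil
  show ?case by simp
next
  case (Cons a as)
  have "[:-a, 1:] dvd (\<Prod>s\<in>S. [:-s, 1:])"
    using Cons(2) assms(1) by (auto simp: poly_prod simp flip: poly_eq_0_iff_dvd)
  then have "[:-a, 1:] * (\<Prod>a\<leftarrow>as. [:-a, 1:]) dvd (\<Prod>s\<in>S. [:-s, 1:]) * (\<Prod>s\<in>S. [:-s, 1:])^length as"
    using Cons by (intro mult_dvd_mono) simp_all
  then show ?case by (simp only: list.map prod_list.Cons length_Cons power_Suc)
qed

lemma coprime_X_if_poly_0_neq_0:
  fixes P :: "complex poly"
  assumes "poly P 0 \<noteq> 0"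
  shows "coprime [:0,1:] P"
  using assms by (intro prime_elem_imp_coprime prime_elem_linear_field_poly) (simp_all add: dvd_iff_poly_eq_0)

definition principal_root :: "nat \<Rightarrow> complex \<Rightarrow> complex" where
  "principal_root m z = rcis (root m (cmod z)) (Arg z / real m)"

text \<open>An \<open>m\<close>-th root commuting with conjugation off the real axis, so that its values on a
  conjugation-closed set are interpolated by a real polynomial.\<close>
definition cnj_root :: "nat \<Rightarrow> complex \<Rightarrow> complex" where
  "cnj_root m z = (if 0 < Im z then principal_root m z else cnj (principal_root m (cnj z)))"

lemma principal_root_power:
  assumes "m \<ge> 1"
  shows "principal_root m z ^ m = z"
proof -
  have "principal_root m z ^ m = rcis (root m (cmod z) ^ m) (real m * (Arg z / real m))"
    unfolding principal_root_def by (rule DeMoivre2)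
  also have "\<dots> = rcis (cmod z) (Arg z)" using assms by (simp add: real_root_pow_pos2)
  also have "\<dots> = z" by (rule rcis_cmod_Arg)
  finally show ?thesis .
qed

lemma cnj_root_power: "m \<ge> 1 \<Longrightarrow> cnj_root m z ^ m = z"
  unfolding cnj_root_def using principal_root_power by (auto simp flip: complex_cnj_power)

lemma cnj_root_cnj: "Im z \<noteq> 0 \<Longrightarrow> cnj_root m (cnj z) = cnj (cnj_root m z)"
  unfolding cnj_root_def by auto

lemma exists_real_poly_root_of_X:
  fixes S :: "complex set"
  assumes "finite S" and "cnj ` S = S" and "S \<inter> \<real> = {}" and "m \<ge> 1" and "j \<ge> 1"
  shows "\<exists>q. cnj_poly q = q \<and> (\<Prod>s\<in>S. [:-s, 1:])^j dvd q^m - [:0,1:]"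
proof -
  define P where "P = (\<Prod>s\<in>S. [:-s, 1:])"
  have nonreal: "Im s \<noteq> 0" if "s \<in> S" for s
    using assms(3) that complex_is_Real_iff by blast
  obtain p where p: "\<forall>s\<in>S. poly p s = cnj_root m s"
    using polynomial_interpolation[OF assms(1)] by blast
  have "poly (real_part_poly p) s = cnj_root m s" if "s \<in> S" for s
  proof -
    have "cnj s \<in> S" using assms(2) that by blast
    then show ?thesis using p that nonreal by (simp add: poly_real_part_poly cnj_root_cnj)
  qed
  then have "\<forall>s\<in>S. poly (real_part_poly p ^ m - [:0,1:]) s = 0"
    using cnj_root_power[OF assms(4)] by simp
  then have "P dvd real_part_poly p ^ m - [:0,1:]"
    unfolding P_def by (rule prod_linear_dvd_if_roots[OF assms(1)])
  moreover have "cnj_poly P = P"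
  proof -
    have "cnj_poly P = (\<Prod>s\<in>S. [:-cnj s, 1:])" unfolding P_def by (simp add: cnj_poly_hom.hom_prod)
    also have "\<dots> = (\<Prod>s\<in>cnj ` S. [:-s, 1:])" by (simp add: prod.reindex inj_on_def)
    finally show ?thesis unfolding P_def assms(2) .
  qed
  moreover have "coprime [:0,1:] P"
    using assms(1,3) by (intro coprime_X_if_poly_0_neq_0) (auto simp: P_def poly_prod)
  ultimately show ?thesis
    using hensel_lift[OF _ cnj_poly_real_part_poly _ _ assms(4,5)] unfolding P_def by blast
qed

section \<open>Polynomials evaluated at matrices\<close>

fun horner_mat :: "'a::comm_ring_1 mat \<Rightarrow> 'a list \<Rightarrow> 'a mat" where
  "horner_mat A [] = 0\<^sub>m (dim_row A) (dim_row A)"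
| "horner_mat A (c # cs) = c \<cdot>\<^sub>m 1\<^sub>m (dim_row A) + A * horner_mat A cs"

definition poly_mat :: "'a::comm_ring_1 poly \<Rightarrow> 'a mat \<Rightarrow> 'a mat" where
  "poly_mat p A = horner_mat A (coeffs p)"

lemma horner_mat_carrier: "A \<in> carrier_mat n n \<Longrightarrow> horner_mat A cs \<in> carrier_mat n n"
  by (induction cs) auto

lemma poly_mat_carrier [simp]: "A \<in> carrier_mat n n \<Longrightarrow> poly_mat p A \<in> carrier_mat n n"
  unfolding poly_mat_def by (rule horner_mat_carrier)

lemma poly_mat_dim [simp]:
  assumes "A \<in> carrier_mat n n"
  shows "dim_row (poly_mat p A) = n" and "dim_col (poly_mat p A) = n"
  using poly_mat_carrier[OF assms] by auto

lemma poly_mat_0 [simp]: "A \<in> carrier_mat n n \<Longrightarrow> poly_mat 0 A = 0\<^sub>m n n"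
  unfolding poly_mat_def by auto

lemma poly_mat_pCons:
  assumes A: "A \<in> carrier_mat n n"
  shows "poly_mat (pCons a p) A = a \<cdot>\<^sub>m 1\<^sub>m n + A * poly_mat p A"
proof (cases "a = 0 \<and> p = 0")
  case True
  with A show ?thesis by (auto intro!: eq_matI)
next
  case False
  then show ?thesis using A unfolding poly_mat_def by (auto simp: cCons_def)
qed

lemma poly_mat_add:
  assumes A: "A \<in> carrier_mat n n"
  shows "poly_mat (p + q) A = poly_mat p A + poly_mat q A"
proof (induction p arbitrary: q rule: pCons_induct)
  case 0
  then show ?case using A by simp
next
  case (pCons a p)
  obtain b q' where q: "q = pCons b q'" by (cases q)
  have AP: "A * poly_mat p A \<in> carrier_mat n n" and AQ: "A * poly_mat q' A \<in> carrier_mat n n"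
    using A by auto
  have "A * (poly_mat p A + poly_mat q' A) = A * poly_mat p A + A * poly_mat q' A"
    using A by (intro mult_add_distrib_mat) auto
  then show ?case
    unfolding q add_pCons poly_mat_pCons[OF A] pCons(2)
    using A AP AQ by (intro eq_matI) (auto simp: distrib_right simp del: index_mult_mat(1))
qed

lemma poly_mat_smult:
  assumes A: "A \<in> carrier_mat n n"
  shows "poly_mat (Polynomial.smult c p) A = c \<cdot>\<^sub>m poly_mat p A"
proof (induction p rule: pCons_induct)
  case 0
  then show ?case using A by simp
next
  case (pCons a p)
  have AP: "A * poly_mat p A \<in> carrier_mat n n" using A by auto
  show ?case
    unfolding smult_pCons poly_mat_pCons[OF A] pCons(2) mult_smult_distrib[OF A poly_mat_carrier[OF A]]
    using carrier_matD[OF A] AP by (intro eq_matI) (auto simp: distrib_left simp del: index_mult_mat(1))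
qed

lemma poly_mat_mult:
  assumes A: "A \<in> carrier_mat n n"
  shows "poly_mat (p * q) A = poly_mat p A * poly_mat q A"
proof (induction p rule: pCons_induct)
  case 0
  then show ?case using A by simp
next
  case (pCons a p)
  have P: "poly_mat p A \<in> carrier_mat n n" and Q: "poly_mat q A \<in> carrier_mat n n" using A by auto
  have APQ: "A * (poly_mat p A * poly_mat q A) \<in> carrier_mat n n" using A P Q by auto
  have zero_add: "0 \<cdot>\<^sub>m 1\<^sub>m n + A * (poly_mat p A * poly_mat q A) = A * (poly_mat p A * poly_mat q A)"
    using carrier_matD[OF A] APQ by (intro eq_matI) (auto simp del: index_mult_mat(1))
  have "poly_mat (pCons a p * q) A = a \<cdot>\<^sub>m poly_mat q A + A * (poly_mat p A * poly_mat q A)"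
    unfolding mult_pCons_left poly_mat_add[OF A] poly_mat_smult[OF A] poly_mat_pCons[OF A] pCons(2) zero_add ..
  also have "\<dots> = (a \<cdot>\<^sub>m 1\<^sub>m n) * poly_mat q A + (A * poly_mat p A) * poly_mat q A"
    unfolding mult_smult_assoc_mat[OF one_carrier_mat Q] left_mult_one_mat[OF Q] assoc_mult_mat[OF A P Q] ..
  also have "\<dots> = (a \<cdot>\<^sub>m 1\<^sub>m n + A * poly_mat p A) * poly_mat q A"
    using A P Q by (intro add_mult_distrib_mat[symmetric]) auto
  finally show ?case unfolding poly_mat_pCons[OF A] .
qed

lemma poly_mat_const:
  assumes A: "A \<in> carrier_mat n n"
  shows "poly_mat [:c:] A = c \<cdot>\<^sub>m 1\<^sub>m n"
  unfolding poly_mat_pCons[OF A] poly_mat_0[OF A] right_mult_zero_mat[OF A] by simp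

lemma poly_mat_X:
  assumes A: "A \<in> carrier_mat n n"
  shows "poly_mat [:0,1:] A = A"
  unfolding poly_mat_pCons[OF A, of 0] poly_mat_const[OF A] using A by (intro eq_matI) auto

lemma poly_mat_linear:
  assumes A: "A \<in> carrier_mat n n"
  shows "poly_mat [:c, 1:] A = c \<cdot>\<^sub>m 1\<^sub>m n + A"
  unfolding poly_mat_pCons[OF A, of c] poly_mat_const[OF A] using A by (intro eq_matI) auto

lemma poly_mat_power:
  assumes A: "A \<in> carrier_mat n n"
  shows "poly_mat (p ^ k) A = poly_mat p A ^\<^sub>m k"
proof (induction k)
  case 0
  have "poly_mat 1 A = 1\<^sub>m n"
    unfolding one_pCons poly_mat_const[OF A] by (intro eq_matI) auto
  then show ?case using A by simp
next
  case (Suc k)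
  then show ?case by (simp only: power_Suc2 poly_mat_mult[OF A] pow_mat.simps)
qed

lemma poly_mat_intertwine:
  assumes A: "A \<in> carrier_mat n n" and C: "C \<in> carrier_mat n n" and H: "H \<in> carrier_mat n n"
    and HA: "H * A = C * H"
  shows "H * poly_mat p A = poly_mat p C * H"
proof (induction p rule: pCons_induct)
  case 0
  then show ?case using A C H by simp
next
  case (pCons a p)
  have PA: "poly_mat p A \<in> carrier_mat n n" and PC: "poly_mat p C \<in> carrier_mat n n" using A C by auto
  have "H * (a \<cdot>\<^sub>m 1\<^sub>m n + A * poly_mat p A) = H * (a \<cdot>\<^sub>m 1\<^sub>m n) + H * (A * poly_mat p A)"
    using A PA by (intro mult_add_distrib_mat[OF H]) auto
  also have "\<dots> = a \<cdot>\<^sub>m H + (H * A) * poly_mat p A"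
    unfolding mult_smult_distrib[OF H one_carrier_mat] right_mult_one_mat[OF H] assoc_mult_mat[OF H A PA] ..
  also have "\<dots> = a \<cdot>\<^sub>m H + C * (H * poly_mat p A)"
    unfolding HA using A C H PA by (simp add: assoc_mult_mat[of C n n H n _ n])
  also have "\<dots> = (a \<cdot>\<^sub>m 1\<^sub>m n) * H + (C * poly_mat p C) * H"
    unfolding pCons(2) mult_smult_assoc_mat[OF one_carrier_mat H] left_mult_one_mat[OF H]
      assoc_mult_mat[OF C PC H] ..
  also have "\<dots> = (a \<cdot>\<^sub>m 1\<^sub>m n + C * poly_mat p C) * H"
    using C PC by (intro add_mult_distrib_mat[symmetric, OF _ _ H]) auto
  finally show ?case unfolding poly_mat_pCons[OF A] poly_mat_pCons[OF C] .
qed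

section \<open>Cayley-Hamilton\<close>

lemma upper_triangular_mult_linear_columns_zero:
  fixes T M :: "'a::comm_ring_1 mat"
  assumes T: "T \<in> carrier_mat n n" and "upper_triangular T" and "k < n"
    and M: "M \<in> carrier_mat n n" and M_cols: "\<forall>r<n. \<forall>c<k. M $$ (r, c) = 0"
  shows "\<forall>r<n. \<forall>c<Suc k. (M * ((- T $$ (k, k)) \<cdot>\<^sub>m 1\<^sub>m n + T)) $$ (r, c) = 0"
proof (intro allI impI)
  fix r c assume "r < n" and "c < Suc k"
  define N where "N = (- T $$ (k, k)) \<cdot>\<^sub>m 1\<^sub>m n + T"
  have "M $$ (r, l) * N $$ (l, c) = 0" if "l < n" for l
  proof (cases "l < k")
    case True
    then show ?thesis using M_cols \<open>r < n\<close> by simp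
  next
    case False
    have "N $$ (l, c) = 0"
    proof (cases "l = c")
      case True
      with \<open>\<not> l < k\<close> \<open>c < Suc k\<close> have "l = k" "c = k" by auto
      then show ?thesis using \<open>k < n\<close> T by (simp add: N_def)
    next
      case False
      with \<open>\<not> l < k\<close> \<open>c < Suc k\<close> have "c < l" by simp
      then show ?thesis using \<open>upper_triangular T\<close> \<open>l < n\<close> \<open>k < n\<close> \<open>c < Suc k\<close> False T
        by (auto simp: N_def upper_triangular_def)
    qed
    then show ?thesis by simp
  qed
  moreover have "N \<in> carrier_mat n n" using T by (simp add: N_def)
  then have "(M * N) $$ (r, c) = (\<Sum>l = 0..<n. M $$ (r, l) * N $$ (l, c))"
    using M \<open>r < n\<close> \<open>c < Suc k\<close> \<open>k < n\<close> by (simp add: scalar_prod_def)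
  ultimately show "(M * N) $$ (r, c) = 0" by simp
qed

lemma poly_mat_upper_triangular_diag:
  fixes T :: "'a::comm_ring_1 mat"
  assumes T: "T \<in> carrier_mat n n" and "upper_triangular T"
  shows "poly_mat (\<Prod>a\<leftarrow>diag_mat T. [:-a, 1:]) T = 0\<^sub>m n n"
proof -
  let ?M = "\<lambda>k. poly_mat (\<Prod>a\<leftarrow>take k (diag_mat T). [:-a, 1:]) T"
  have "\<forall>r<n. \<forall>c<k. ?M k $$ (r, c) = 0" if "k \<le> n" for k
    using that
  proof (induction k)
    case 0
    then show ?case by simp
  next
    case (Suc k)
    then have "k < n" by simp
    then have "take (Suc k) (diag_mat T) = take k (diag_mat T) @ [T $$ (k, k)]"
      using T by (simp add: diag_mat_def take_Suc_conv_app_nth)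
    then have "(\<Prod>a\<leftarrow>take (Suc k) (diag_mat T). [:-a, 1:])
        = (\<Prod>a\<leftarrow>take k (diag_mat T). [:-a, 1:]) * [:- T $$ (k, k), 1:]"
      by simp
    then have "?M (Suc k) = ?M k * ((- T $$ (k, k)) \<cdot>\<^sub>m 1\<^sub>m n + T)"
      by (simp only: poly_mat_mult[OF T] poly_mat_linear[OF T])
    then show ?case
      using upper_triangular_mult_linear_columns_zero[OF T assms(2) \<open>k < n\<close>] Suc T by simp
  qed
  from this[of n] have "\<forall>r<n. \<forall>c<n. poly_mat (\<Prod>a\<leftarrow>diag_mat T. [:-a, 1:]) T $$ (r, c) = 0"
    using T by (simp add: diag_mat_def)
  then show ?thesis using T by (intro eq_matI) auto
qed

lemma cayley_hamilton:
  fixes A :: "complex mat"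
  assumes A: "A \<in> carrier_mat n n"
  shows "poly_mat (char_poly A) A = 0\<^sub>m n n"
proof -
  obtain es where es: "char_poly A = (\<Prod>a\<leftarrow>es. [:-a, 1:])"
    using char_poly_factorized[OF A] by blast
  obtain T P Q where "schur_decomposition A es = (T, P, Q)"
    by (cases "schur_decomposition A es") auto
  from schur_decomposition[OF A es this] have sim: "similar_mat_wit A T P Q"
    and "upper_triangular T" and "diag_mat T = es" by auto
  note sim = similar_mat_witD2[OF A sim]
  have "Q * A = (Q * P) * (T * Q)"
    unfolding sim(3) assoc_mult_mat[OF sim(6,5,7)]
    by (rule assoc_mult_mat[OF sim(7,6) mult_carrier_mat[OF sim(5,7)], symmetric])
  also have "\<dots> = T * Q" using sim by simp
  finally have "Q * A = T * Q" .
  then have "Q * poly_mat (char_poly A) A = poly_mat (char_poly A) T * Q"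
    using sim by (intro poly_mat_intertwine) auto
  also have "poly_mat (char_poly A) T = 0\<^sub>m n n"
    unfolding es \<open>diag_mat T = es\<close>[symmetric] using sim \<open>upper_triangular T\<close>
    by (intro poly_mat_upper_triangular_diag) auto
  finally have "P * (Q * poly_mat (char_poly A) A) = 0\<^sub>m n n" using sim by simp
  then show ?thesis
    using sim A by (simp add: assoc_mult_mat[of P n n Q n _ n, symmetric])
qed

lemma poly_mat_eq_if_char_poly_dvd_diff:
  fixes A :: "complex mat"
  assumes A: "A \<in> carrier_mat n n" and "char_poly A dvd p - q"
  shows "poly_mat p A = poly_mat q A"
proof -
  obtain h where "p = q + char_poly A * h"
    using assms(2) by (metis diff_add_cancel dvdE add.commute)
  then show ?thesis
    using A by (simp add: poly_mat_add poly_mat_mult cayley_hamilton)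
qed

lemma char_poly_dvd_power_prod_spectrum:
  fixes A :: "complex mat"
  assumes A: "A \<in> carrier_mat n n"
  shows "char_poly A dvd (\<Prod>s\<in>spectrum A. [:-s, 1:])^n"
proof -
  obtain es where es: "char_poly A = (\<Prod>a\<leftarrow>es. [:-a, 1:])" and "length es = n"
    using char_poly_factorized[OF A] by blast
  moreover have "spectrum A = set es"
    unfolding spectrum_root_char_poly[OF A] es by (auto simp: poly_prod_list prod_list_zero_iff)
  ultimately show ?thesis
    unfolding es using prod_list_linear_dvd_power[of "spectrum A" es] by simp
qed

lemma spectrum_cnj_closed:
  fixes A :: "complex mat"
  assumes A: "A \<in> carrier_mat n n" and "cnj_poly (char_poly A) = char_poly A"
  shows "cnj ` spectrum A = spectrum A"
proof -
  have cnj_iff: "cnj z \<in> spectrum A \<longleftrightarrow> z \<in> spectrum A" for z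
    unfolding spectrum_root_char_poly[OF A]
    using arg_cong[OF assms(2), of "\<lambda>p. poly p z"] by auto
  show ?thesis
  proof
    show "cnj ` spectrum A \<subseteq> spectrum A" using cnj_iff by auto
    show "spectrum A \<subseteq> cnj ` spectrum A"
    proof
      fix z assume "z \<in> spectrum A"
      then have "cnj z \<in> spectrum A" using cnj_iff by simp
      then show "z \<in> cnj ` spectrum A" by (rule rev_image_eqI) simp
    qed
  qed
qed

section \<open>Adjoints and H-selfadjointness\<close>

lemma mat_adjoint_dim [simp]:
  fixes A :: "complex mat"
  shows "dim_row (mat_adjoint A) = dim_col A" and "dim_col (mat_adjoint A) = dim_row A"
  unfolding mat_adjoint_def mat_of_rows_def by auto

lemma mat_adjoint_index [simp]:
  fixes A :: "complex mat"
  shows "i < dim_col A \<Longrightarrow> j < dim_row A \<Longrightarrow> mat_adjoint A $$ (i, j) = cnj (A $$ (j, i))"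
  unfolding mat_adjoint_def by (simp add: mat_of_rows_index)

lemma mat_adjoint_carrier [simp]:
  fixes A :: "complex mat"
  shows "A \<in> carrier_mat n m \<Longrightarrow> mat_adjoint A \<in> carrier_mat m n"
  unfolding carrier_mat_def by simp

lemma mat_adjoint_mult:
  fixes A B :: "complex mat"
  assumes "A \<in> carrier_mat n k" and "B \<in> carrier_mat k l"
  shows "mat_adjoint (A * B) = mat_adjoint B * mat_adjoint A"
  using assms by (intro eq_matI) (auto simp: scalar_prod_def mult.commute)

lemma mat_adjoint_add:
  fixes A B :: "complex mat"
  assumes "A \<in> carrier_mat n m" and "B \<in> carrier_mat n m"
  shows "mat_adjoint (A + B) = mat_adjoint A + mat_adjoint B"
  using assms by (intro eq_matI) auto

lemma mat_adjoint_smult_one: "mat_adjoint (c \<cdot>\<^sub>m 1\<^sub>m n :: complex mat) = cnj c \<cdot>\<^sub>m 1\<^sub>m n"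
  by (intro eq_matI) auto

lemma mat_adjoint_zero: "mat_adjoint (0\<^sub>m n n :: complex mat) = 0\<^sub>m n n"
  by (intro eq_matI) auto

lemma mat_adjoint_poly_mat:
  fixes A :: "complex mat"
  assumes A: "A \<in> carrier_mat n n"
  shows "mat_adjoint (poly_mat p A) = poly_mat (cnj_poly p) (mat_adjoint A)"
proof (induction p rule: pCons_induct)
  case 0
  then show ?case using A by (simp add: mat_adjoint_zero poly_mat_0[OF mat_adjoint_carrier[OF A]])
next
  case (pCons a p)
  have P: "poly_mat p A \<in> carrier_mat n n" using A by simp
  have "A * poly_mat p A = poly_mat p A * A"
    using A by (intro poly_mat_intertwine) auto
  then have "mat_adjoint (A * poly_mat p A) = mat_adjoint A * mat_adjoint (poly_mat p A)"
    using mat_adjoint_mult[OF P A] by simp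
  moreover have "mat_adjoint (a \<cdot>\<^sub>m 1\<^sub>m n + A * poly_mat p A)
      = mat_adjoint (a \<cdot>\<^sub>m 1\<^sub>m n) + mat_adjoint (A * poly_mat p A)"
    using A P by (intro mat_adjoint_add) auto
  ultimately show ?case
    unfolding poly_mat_pCons[OF A] cnj_poly_pCons poly_mat_pCons[OF mat_adjoint_carrier[OF A]]
    by (simp only: mat_adjoint_smult_one pCons(2))
qed

lemma H_selfadjoint_poly_mat:
  assumes B: "B \<in> carrier_mat n n" and H: "H \<in> carrier_mat n n"
    and "H_selfadjoint H B" and "cnj_poly q = q"
  shows "H_selfadjoint H (poly_mat q B)"
proof -
  have "H * poly_mat q B = poly_mat q (mat_adjoint B) * H"
    using assms(3) B H by (intro poly_mat_intertwine) (auto simp: H_selfadjoint_def)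
  also have "poly_mat q (mat_adjoint B) = mat_adjoint (poly_mat q B)"
    using mat_adjoint_poly_mat[OF B] assms(4) by simp
  finally show ?thesis unfolding H_selfadjoint_def .
qed

lemma cnj_poly_char_poly_H_selfadjoint:
  fixes B H :: "complex mat"
  assumes B: "B \<in> carrier_mat n n" and H: "H \<in> carrier_mat n n"
    and "invertible_mat H" and "H_selfadjoint H B"
  shows "cnj_poly (char_poly B) = char_poly B"
proof -
  have "mat_adjoint B = transpose_mat (map_mat cnj B)"
    by (rule eq_matI) auto
  then have "char_poly (mat_adjoint B) = cnj_poly (char_poly B)"
    using B cnj_hom.char_poly_hom[OF B] by simp
  moreover have "similar_mat (mat_adjoint B) B"
  proof -
    obtain H' where "H * H' = 1\<^sub>m (dim_row H)" and "H' * H = 1\<^sub>m (dim_row H')"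
      using assms(3) unfolding invertible_mat_def inverts_mat_def by blast
    moreover have "dim_row H = n" "dim_col H = n" using H by auto
    ultimately have H': "H' \<in> carrier_mat n n" "H * H' = 1\<^sub>m n" "H' * H = 1\<^sub>m n"
      by (metis carrier_matI index_mult_mat(2,3) index_one_mat(2,3))+
    have "mat_adjoint B = (mat_adjoint B * H) * H'"
      using B H H' by (simp add: assoc_mult_mat[of _ n n H n H' n])
    also have "\<dots> = H * B * H'"
      using assms(4) by (simp add: H_selfadjoint_def)
    finally have "similar_mat_wit (mat_adjoint B) B H H'"
      unfolding similar_mat_wit_def Let_def using B H H' by auto
    then show ?thesis unfolding similar_mat_def by blast
  qed
  ultimately show ?thesis using char_poly_similar by metis
qed

section \<open>The matrix class Omega\<close>

lemma Omega_carrier: "M \<in> Omega k \<Longrightarrow> M \<in> carrier_mat (2*k) (2*k)"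
  unfolding Omega_def by auto

lemma OmegaD:
  assumes "M \<in> Omega k" and "i < k" and "j < k"
  shows "M $$ (k+i, k+j) = cnj (M $$ (i, j))" and "M $$ (k+i, j) = - cnj (M $$ (i, k+j))"
    and "M $$ (i, k+j) = - cnj (M $$ (k+i, j))"
proof -
  show "M $$ (k+i, k+j) = cnj (M $$ (i, j))" and *: "M $$ (k+i, j) = - cnj (M $$ (i, k+j))"
    using assms unfolding Omega_def by auto
  from * show "M $$ (i, k+j) = - cnj (M $$ (k+i, j))" by simp
qed

lemma Omega_add: "M \<in> Omega k \<Longrightarrow> N \<in> Omega k \<Longrightarrow> M + N \<in> Omega k"
  unfolding Omega_def by auto

lemma Omega_zero: "0\<^sub>m (2*k) (2*k) \<in> Omega k"
  unfolding Omega_def by auto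

lemma Omega_smult_one: "c \<in> \<real> \<Longrightarrow> c \<cdot>\<^sub>m 1\<^sub>m (2*k) \<in> Omega k"
  unfolding Omega_def by (auto simp: Reals_cnj_iff)

lemma sum_split_halves:
  fixes f :: "nat \<Rightarrow> 'a::comm_monoid_add"
  shows "(\<Sum>l = 0..<2*k. f l) = (\<Sum>l = 0..<k. f l + f (k+l))"
proof -
  have "(\<Sum>l = 0..<2*k. f l) = (\<Sum>l = 0..<k. f l) + (\<Sum>l = k..<k+k. f l)"
    by (simp add: mult_2 sum.atLeastLessThan_concat)
  also have "(\<Sum>l = k..<k+k. f l) = (\<Sum>l = 0..<k. f (k+l))"
    using sum.shift_bounds_nat_ivl[of f 0 k k] by (simp add: add.commute)
  finally show ?thesis by (simp add: sum.distrib)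
qed

lemma Omega_mult:
  assumes M: "M \<in> Omega k" and N: "N \<in> Omega k"
  shows "M * N \<in> Omega k"
proof -
  have entry: "(M * N) $$ (a, b) = (\<Sum>l = 0..<k. M $$ (a, l) * N $$ (l, b) + M $$ (a, k+l) * N $$ (k+l, b))"
    if "a < 2*k" "b < 2*k" for a b
    using that Omega_carrier[OF M] Omega_carrier[OF N] by (simp add: scalar_prod_def sum_split_halves)
  have "(M * N) $$ (k+i, k+j) = cnj ((M * N) $$ (i, j))" and
    "(M * N) $$ (k+i, j) = - cnj ((M * N) $$ (i, k+j))" if i: "i < k" and j: "j < k" for i j
  proof -
    have "M $$ (k+i, l) * N $$ (l, k+j) + M $$ (k+i, k+l) * N $$ (k+l, k+j)
        = cnj (M $$ (i, l) * N $$ (l, j) + M $$ (i, k+l) * N $$ (k+l, j))"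
      and "M $$ (k+i, l) * N $$ (l, j) + M $$ (k+i, k+l) * N $$ (k+l, j)
        = - cnj (M $$ (i, l) * N $$ (l, k+j) + M $$ (i, k+l) * N $$ (k+l, k+j))"
      if "l < k" for l
      using OmegaD(1,2)[OF M i that] OmegaD(1,3)[OF N that j] by (simp_all add: algebra_simps)
    then show "(M * N) $$ (k+i, k+j) = cnj ((M * N) $$ (i, j))"
      and "(M * N) $$ (k+i, j) = - cnj ((M * N) $$ (i, k+j))"
      using i j by (simp_all add: entry sum_negf sum_subtractf)
  qed
  then show ?thesis
    using Omega_carrier[OF M] Omega_carrier[OF N] unfolding Omega_def by auto
qed

lemma poly_mat_Omega:
  assumes B: "B \<in> Omega k" and "cnj_poly q = q"
  shows "poly_mat q B \<in> Omega k"
  using \<open>cnj_poly q = q\<close>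
proof (induction q rule: pCons_induct)
  case 0
  then show ?case using Omega_carrier[OF B] Omega_zero by simp
next
  case (pCons a p)
  then have "cnj a = a" and "cnj_poly p = p" by (simp_all add: cnj_poly_pCons)
  then have "a \<in> \<real>" and "poly_mat p B \<in> Omega k" using pCons(2) by (simp_all add: Reals_cnj_iff)
  then show ?case
    unfolding poly_mat_pCons[OF Omega_carrier[OF B]] using B
    by (intro Omega_add Omega_smult_one Omega_mult)
qed

theorem mainTheorem7:
  fixes m n :: nat and H B :: "complex mat"
  assumes "m \<ge> 1"
    and "H \<in> Omega (2*n)" and "invertible_mat H" and "hermitian_mat H"
    and "B \<in> Omega (2*n)" and "H_selfadjoint H B"
    and "spectrum B \<inter> \<real> = {}"
  shows "\<exists>A \<in> Omega (2*n). H_selfadjoint H A \<and> A ^\<^sub>m m = B"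
proof -
  define N where "N = 2 * (2*n)"
  have B: "B \<in> carrier_mat N N" and H: "H \<in> carrier_mat N N"
    unfolding N_def using Omega_carrier[OF assms(5)] Omega_carrier[OF assms(2)] by simp_all
  have "cnj ` spectrum B = spectrum B"
    by (rule spectrum_cnj_closed[OF B cnj_poly_char_poly_H_selfadjoint[OF B H assms(3,6)]])
  txt \<open>Exponent \<open>Suc N\<close> rather than \<open>N\<close>, which vanishes for \<open>n = 0\<close>.\<close>
  from exists_real_poly_root_of_X[OF card_finite_spectrum(1)[OF B] this assms(7,1), of "Suc N"]
  obtain q where q_real: "cnj_poly q = q"
    and q_root: "(\<Prod>s\<in>spectrum B. [:-s, 1:])^Suc N dvd q^m - [:0,1:]" by auto
  have "char_poly B dvd (\<Prod>s\<in>spectrum B. [:-s, 1:])^Suc N"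
    using char_poly_dvd_power_prod_spectrum[OF B] by (rule dvd_trans) (simp add: le_imp_power_dvd)
  then have "char_poly B dvd q^m - [:0,1:]" using q_root by (rule dvd_trans)
  then have "poly_mat (q^m) B = poly_mat [:0,1:] B"
    by (rule poly_mat_eq_if_char_poly_dvd_diff[OF B])
  then have "poly_mat q B ^\<^sub>m m = B"
    by (simp only: poly_mat_power[OF B] poly_mat_X[OF B])
  moreover have "poly_mat q B \<in> Omega (2*n)" using poly_mat_Omega[OF assms(5) q_real] .
  moreover have "H_selfadjoint H (poly_mat q B)" using H_selfadjoint_poly_mat[OF B H assms(6) q_real] .
  ultimately show ?thesis by blast
qed

end
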